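(* Let $\Gamma$ be a distance-regular graph with diameter $D\ge 3$, and let $\sigma_0,\dots,\sigma_D$ and $\rho_0,\dots,\rho_D$ be pseudo cosine sequences of $\Gamma$, with $\sigma=\sigma_1$, $\rho=\rho_1$. Then $$(\sigma-\rho)\sum_{h=0}^{i}k_h\sigma_h\rho_h=\frac{b_1b_2\cdots b_i}{c_1c_2\cdots c_i}\,(\sigma_{i+1}\rho_i-\sigma_i\rho_{i+1})\qquad(0\le i\le D-1).$$
   Context: $\Gamma$ is a finite connected undirected graph without loops or multiple edges, distance-regular with diameter $D$, intersection numbers $a_i,b_i,c_i$ ($c_0=0$, $b_D=0$), valency $k=b_0$, $c_i+a_i+b_i=k$, and $k_h=\frac{b_0b_1\cdots b_{h-1}}{c_1c_2\cdots c_h}$ (the number of vertices at distance $h$ from a given vertex). For $\theta\in\mathbb{R}$ the pseudo cosine sequence for $\theta$ is the sequence of reals $\sigma_0,\dots,\sigma_D$ with $\sigma_0=1$ and $c_i\sigma_{i-1}+a_i\sigma_i+b_i\sigma_{i+1}=\theta\sigma_i$ for $0\le i\le D-1$; then $\theta=k\sigma_1$. *)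

theory Defs
  imports Complex_Main
begin

definition gdist :: "('v \<Rightarrow> 'v \<Rightarrow> bool) \<Rightarrow> 'v \<Rightarrow> 'v \<Rightarrow> nat" where
  "gdist E x y = (LEAST n. (E ^^ n) x y)"

definition simple_connected_graph :: "'v set \<Rightarrow> ('v \<Rightarrow> 'v \<Rightarrow> bool) \<Rightarrow> bool" where
  "simple_connected_graph V E \<longleftrightarrow>
     finite V \<and> V \<noteq> {} \<and>
     (\<forall>x y. E x y \<longrightarrow> x \<in> V \<and> y \<in> V) \<and>
     (\<forall>x y. E x y \<longrightarrow> E y x) \<and>
     (\<forall>x. \<not> E x x) \<and>
     (\<forall>x\<in>V. \<forall>y\<in>V. \<exists>n. (E ^^ n) x y)"

definition diameter :: "'v set \<Rightarrow> ('v \<Rightarrow> 'v \<Rightarrow> bool) \<Rightarrow> nat" where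
  "diameter V E = Max {gdist E x y | x y. x \<in> V \<and> y \<in> V}"

text \<open>Distance-regular graph with diameter D and intersection numbers a_h, b_h, c_h
  (for 0 \<le> h \<le> D): for all x, y at distance h, y has exactly c_h neighbours at
  distance h-1 from x, a_h at distance h, b_h at distance h+1.
  (For h = 0 the set for c_0 is empty, so c_0 = 0; b_D = 0 likewise.)\<close>

definition distance_regular ::
  "'v set \<Rightarrow> ('v \<Rightarrow> 'v \<Rightarrow> bool) \<Rightarrow> nat \<Rightarrow> (nat \<Rightarrow> nat) \<Rightarrow> (nat \<Rightarrow> nat) \<Rightarrow> (nat \<Rightarrow> nat) \<Rightarrow> bool" where
  "distance_regular V E D a b c \<longleftrightarrow>
     simple_connected_graph V E \<and> D = diameter V E \<and>
     (\<forall>x\<in>V. \<forall>y\<in>V. \<forall>h\<le>D. gdist E x y = h \<longrightarrow>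
        (c h = card {z\<in>V. E y z \<and> (0 < h \<and> gdist E x z = h - 1)} \<and>
         a h = card {z\<in>V. E y z \<and> gdist E x z = h} \<and>
         b h = card {z\<in>V. E y z \<and> gdist E x z = h + 1}))"

definition kh :: "(nat \<Rightarrow> nat) \<Rightarrow> (nat \<Rightarrow> nat) \<Rightarrow> nat \<Rightarrow> real" where
  "kh b c h = (\<Prod>j<h. real (b j)) / (\<Prod>j=1..h. real (c j))"

text \<open>Pseudo cosine sequence for theta: sigma_0 = 1 and
  c_i sigma_{i-1} + a_i sigma_i + b_i sigma_{i+1} = theta sigma_i for 0 \<le> i \<le> D-1
  (with c_0 = 0 the term sigma_{-1} is irrelevant).\<close>
definition pseudo_cosine_seq ::
  "nat \<Rightarrow> (nat \<Rightarrow> nat) \<Rightarrow> (nat \<Rightarrow> nat) \<Rightarrow> (nat \<Rightarrow> nat) \<Rightarrow> real \<Rightarrow> (nat \<Rightarrow> real) \<Rightarrow> bool" where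
  "pseudo_cosine_seq D a b c \<theta> \<sigma> \<longleftrightarrow>
     \<sigma> 0 = 1 \<and>
     (\<forall>i. i + 1 \<le> D \<longrightarrow>
        real (c i) * (if i = 0 then 0 else \<sigma> (i - 1)) + real (a i) * \<sigma> i + real (b i) * \<sigma> (i + 1)
          = \<theta> * \<sigma> i)"

end

theory Submission
  imports Defs
begin

text \<open>For two pseudo cosine sequences \<open>\<sigma>\<close>, \<open>\<rho>\<close> for \<open>\<theta>\<close>, \<open>\<eta>\<close>, the Casoratian
  \<open>W i = \<sigma>(i+1) \<rho>(i) - \<sigma>(i) \<rho>(i+1)\<close> satisfies
  \<open>b\<^sub>i W i = c\<^sub>i W (i-1) + (\<theta> - \<eta>) \<sigma>(i) \<rho>(i)\<close>, and \<open>\<theta> - \<eta> = k (\<sigma>\<^sub>1 - \<rho>\<^sub>1)\<close>.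
  Multiplying by \<open>b\<^sub>1\<cdots>b\<^sub>i\<^sub>-\<^sub>1 / (c\<^sub>1\<cdots>c\<^sub>i)\<close> turns this into a telescoping
  sum with weights \<open>k\<^sub>h\<close>. The only graph-theoretic input is \<open>a\<^sub>0 = 0\<close> and
  \<open>c\<^sub>h > 0\<close> for \<open>1 \<le> h \<le> D\<close>.\<close>

lemma gdist_self: "gdist E x x = 0"
  unfolding gdist_def by (rule Least_eq_0) simp

lemma gdist_walk:
  assumes "simple_connected_graph V E" "x \<in> V" "y \<in> V"
  shows "(E ^^ gdist E x y) x y"
proof -
  obtain n where "(E ^^ n) x y"
    using assms unfolding simple_connected_graph_def by blast
  then show ?thesis unfolding gdist_def by (rule LeastI)
qed

lemma gdist_le_walk: "(E ^^ n) x y \<Longrightarrow> gdist E x y \<le> n"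
  unfolding gdist_def by (rule Least_le)

lemma gdist_Suc_neighbour:
  assumes g: "simple_connected_graph V E" and xy: "x \<in> V" "y \<in> V"
    and d: "gdist E x y = Suc m"
  obtains w where "w \<in> V" "E y w" "gdist E x w = m"
proof -
  have "(E ^^ Suc m) x y" using gdist_walk[OF g xy] d by simp
  then obtain w where walk: "(E ^^ m) x w" and wy: "E w y" by auto
  have w: "w \<in> V" "E y w" using g wy unfolding simple_connected_graph_def by blast+
  have "(E ^^ Suc (gdist E x w)) x y" using gdist_walk[OF g xy(1) w(1)] wy by auto
  then have "Suc m \<le> Suc (gdist E x w)" using d gdist_le_walk by metis
  with gdist_le_walk[OF walk] have "gdist E x w = m" by simp
  with w that show ?thesis by blast
qed

lemma gdist_intermediate:
  assumes g: "simple_connected_graph V E" and x: "x \<in> V"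
  shows "y \<in> V \<Longrightarrow> gdist E x y = d \<Longrightarrow> h \<le> d \<Longrightarrow> \<exists>w\<in>V. gdist E x w = h"
proof (induction d arbitrary: y)
  case 0
  then show ?case by auto
next
  case (Suc d)
  show ?case
  proof (cases "h = Suc d")
    case True
    then show ?thesis using Suc.prems by blast
  next
    case False
    obtain w where "w \<in> V" "gdist E x w = d"
      using gdist_Suc_neighbour[OF g x Suc.prems(1,2)] by blast
    then show ?thesis using Suc False by auto
  qed
qed

lemma diameter_attained:
  assumes g: "simple_connected_graph V E"
  obtains x y where "x \<in> V" "y \<in> V" "gdist E x y = diameter V E"
proof -
  let ?S = "{gdist E x y | x y. x \<in> V \<and> y \<in> V}"
  have V: "finite V" "V \<noteq> {}" using g by (simp_all add: simple_connected_graph_def)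
  then have "finite ?S" using finite_image_set2[of "\<lambda>x. x \<in> V" "\<lambda>y. y \<in> V"] by simp
  moreover have "?S \<noteq> {}" using V(2) by blast
  ultimately have "diameter V E \<in> ?S" unfolding diameter_def by (rule Max_in)
  then obtain x y where "x \<in> V" "y \<in> V" "diameter V E = gdist E x y" by blast
  then show ?thesis using that by simp
qed

lemma distance_regular_intersection_numbers:
  assumes "distance_regular V E D a b c" "x \<in> V" "y \<in> V" "gdist E x y = h" "h \<le> D"
  shows "c h = card {z\<in>V. E y z \<and> (0 < h \<and> gdist E x z = h - 1)}"
    and "a h = card {z\<in>V. E y z \<and> gdist E x z = h}"
    and "b h = card {z\<in>V. E y z \<and> gdist E x z = h + 1}"
  using assms unfolding distance_regular_def by blast+

lemma distance_regular_c_pos: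
  assumes dr: "distance_regular V E D a b c" and h: "1 \<le> h" "h \<le> D"
  shows "c h > 0"
proof -
  have g: "simple_connected_graph V E" and D: "D = diameter V E"
    using dr unfolding distance_regular_def by blast+
  obtain x y where xy: "x \<in> V" "y \<in> V" "gdist E x y = D"
    by (rule diameter_attained[OF g, folded D])
  obtain w where w: "w \<in> V" "gdist E x w = h"
    using gdist_intermediate[OF g xy(1) xy(2,3) h(2)] by blast
  obtain m where m: "h = Suc m" using h by (cases h) auto
  obtain z where z: "z \<in> V" "E w z" "gdist E x z = m"
    using gdist_Suc_neighbour[OF g xy(1) w(1)] w m by blast
  let ?C = "{z\<in>V. E w z \<and> (0 < h \<and> gdist E x z = h - 1)}"
  have "c h = card ?C" using distance_regular_intersection_numbers(1)[OF dr xy(1) w h(2)] .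
  moreover have "finite ?C" using g unfolding simple_connected_graph_def by simp
  moreover have "z \<in> ?C" using z m by auto
  ultimately show ?thesis using card_gt_0_iff[of ?C] by auto
qed

lemma distance_regular_a0:
  assumes dr: "distance_regular V E D a b c"
  shows "a 0 = 0"
proof -
  have g: "simple_connected_graph V E" using dr unfolding distance_regular_def by blast
  obtain x where x: "x \<in> V" using g unfolding simple_connected_graph_def by blast
  have "a 0 = card {z\<in>V. E x z \<and> gdist E x z = 0}"
    using distance_regular_intersection_numbers(2)[OF dr x x gdist_self] by simp
  moreover have "{z\<in>V. E x z \<and> gdist E x z = 0} = {}"
  proof safe
    fix z assume z: "z \<in> V" "E x z" "gdist E x z = 0"
    then have "x = z" using gdist_walk[OF g x z(1)] by simp
    with z(2) g show "z \<in> {}" unfolding simple_connected_graph_def by blast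
  qed
  ultimately show ?thesis by simp
qed

lemma pseudo_cosine_seq_eigenvalue:
  assumes "pseudo_cosine_seq D a b c \<theta> \<sigma>" "a 0 = 0" "1 \<le> D"
  shows "\<theta> = real (b 0) * \<sigma> 1"
  using assms unfolding pseudo_cosine_seq_def by (auto dest: spec[of _ 0])

definition casoratian :: "(nat \<Rightarrow> real) \<Rightarrow> (nat \<Rightarrow> real) \<Rightarrow> nat \<Rightarrow> real" where
  "casoratian \<sigma> \<rho> i = \<sigma> (i + 1) * \<rho> i - \<sigma> i * \<rho> (i + 1)"

lemma pseudo_cosine_seq_casoratian_Suc:
  assumes \<sigma>: "pseudo_cosine_seq D a b c \<theta> \<sigma>" and \<rho>: "pseudo_cosine_seq D a b c \<eta> \<rho>"
    and i: "Suc i + 1 \<le> D"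
  shows "real (b (Suc i)) * casoratian \<sigma> \<rho> (Suc i)
       = (\<theta> - \<eta>) * \<sigma> (Suc i) * \<rho> (Suc i) + real (c (Suc i)) * casoratian \<sigma> \<rho> i"
proof -
  have "real (b (Suc i)) * \<sigma> (Suc i + 1)
      = \<theta> * \<sigma> (Suc i) - real (c (Suc i)) * \<sigma> i - real (a (Suc i)) * \<sigma> (Suc i)"
    using \<sigma> i unfolding pseudo_cosine_seq_def by (auto dest: spec[of _ "Suc i"])
  moreover have "real (b (Suc i)) * \<rho> (Suc i + 1)
      = \<eta> * \<rho> (Suc i) - real (c (Suc i)) * \<rho> i - real (a (Suc i)) * \<rho> (Suc i)"
    using \<rho> i unfolding pseudo_cosine_seq_def by (auto dest: spec[of _ "Suc i"])
  ultimately show ?thesis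
    unfolding casoratian_def Suc_eq_plus1 by algebra
qed

lemma kh_Suc:
  "kh b c (Suc i) = real (b 0) * (\<Prod>j=1..i. real (b j)) / ((\<Prod>j=1..i. real (c j)) * real (c (Suc i)))"
proof -
  have "(\<Prod>j<Suc i. real (b j)) = real (b 0) * (\<Prod>j<i. real (b (Suc j)))"
    by (rule prod.lessThan_Suc_shift)
  moreover have "(\<Prod>j=1..i. real (b j)) = (\<Prod>j<i. real (b (Suc j)))"
    by (simp add: prod.atLeast1_atMost_eq)
  ultimately show ?thesis unfolding kh_def by simp
qed

lemma pseudo_cosine_seq_christoffel_darboux:
  assumes \<sigma>: "pseudo_cosine_seq D a b c \<theta> \<sigma>" and \<rho>: "pseudo_cosine_seq D a b c \<eta> \<rho>"
    and a0: "a 0 = 0" and i: "i + 1 \<le> D" and c_nz: "\<And>h. 1 \<le> h \<Longrightarrow> h \<le> i \<Longrightarrow> c h \<noteq> 0"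
  shows "(\<sigma> 1 - \<rho> 1) * (\<Sum>h=0..i. kh b c h * \<sigma> h * \<rho> h)
       = (\<Prod>j=1..i. real (b j)) / (\<Prod>j=1..i. real (c j)) * casoratian \<sigma> \<rho> i"
  using i c_nz
proof (induction i)
  case 0
  have "\<sigma> 0 = 1" "\<rho> 0 = 1" using \<sigma> \<rho> unfolding pseudo_cosine_seq_def by blast+
  then show ?case by (simp add: kh_def casoratian_def)
next
  case (Suc i)
  define P where "P = (\<Prod>j=1..i. real (b j)) / (\<Prod>j=1..i. real (c j))"
  let ?W = "casoratian \<sigma> \<rho>"
  have IH: "(\<sigma> 1 - \<rho> 1) * (\<Sum>h=0..i. kh b c h * \<sigma> h * \<rho> h) = P * ?W i"
    unfolding P_def by (rule Suc.IH) (use Suc.prems in auto)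
  have c: "real (c (Suc i)) \<noteq> 0" using Suc.prems by simp
  have kh_Suc_ratio: "kh b c (Suc i) = real (b 0) * P / real (c (Suc i))"
    unfolding kh_Suc P_def by simp
  have "\<theta> - \<eta> = real (b 0) * (\<sigma> 1 - \<rho> 1)"
    using pseudo_cosine_seq_eigenvalue[OF \<sigma> a0] pseudo_cosine_seq_eigenvalue[OF \<rho> a0] Suc.prems
    by (simp add: right_diff_distrib)
  then have bW: "real (b (Suc i)) * ?W (Suc i)
      = real (b 0) * (\<sigma> 1 - \<rho> 1) * \<sigma> (Suc i) * \<rho> (Suc i) + real (c (Suc i)) * ?W i"
    using pseudo_cosine_seq_casoratian_Suc[OF \<sigma> \<rho> Suc.prems(1)] by simp
  have "(\<sigma> 1 - \<rho> 1) * (\<Sum>h=0..Suc i. kh b c h * \<sigma> h * \<rho> h)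
      = (\<sigma> 1 - \<rho> 1) * (kh b c (Suc i) * \<sigma> (Suc i) * \<rho> (Suc i)) + P * ?W i"
    by (simp add: distrib_left flip: IH)
  also have "\<dots> = P / real (c (Suc i)) * (real (b (Suc i)) * ?W (Suc i))"
    using c by (simp only: bW kh_Suc_ratio) (simp add: field_simps)
  also have "\<dots> = (\<Prod>j=1..Suc i. real (b j)) / (\<Prod>j=1..Suc i. real (c j)) * ?W (Suc i)"
    by (simp add: P_def)
  finally show ?case .
qed

theorem lemma3p2:
  fixes V :: "'v set" and E :: "'v \<Rightarrow> 'v \<Rightarrow> bool"
    and D :: nat and a b c :: "nat \<Rightarrow> nat"
    and \<sigma>s \<rho>s :: "nat \<Rightarrow> real"
  assumes "distance_regular V E D a b c"
    and "D \<ge> 3"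
    and "\<exists>\<theta>. pseudo_cosine_seq D a b c \<theta> \<sigma>s"
    and "\<exists>\<theta>. pseudo_cosine_seq D a b c \<theta> \<rho>s"
    and "i \<le> D - 1"
  shows "(\<sigma>s 1 - \<rho>s 1) * (\<Sum>h=0..i. kh b c h * \<sigma>s h * \<rho>s h)
         = (\<Prod>j=1..i. real (b j)) / (\<Prod>j=1..i. real (c j))
           * (\<sigma>s (i + 1) * \<rho>s i - \<sigma>s i * \<rho>s (i + 1))"
proof -
  obtain \<theta> \<eta> where \<sigma>: "pseudo_cosine_seq D a b c \<theta> \<sigma>s" and \<rho>: "pseudo_cosine_seq D a b c \<eta> \<rho>s"
    using assms(3,4) by blast
  have "i + 1 \<le> D" using assms(2,5) by linarith
  moreover have "c h \<noteq> 0" if "1 \<le> h" "h \<le> i" for h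
    using distance_regular_c_pos[OF assms(1), of h] that \<open>i + 1 \<le> D\<close> by simp
  ultimately have "(\<sigma>s 1 - \<rho>s 1) * (\<Sum>h=0..i. kh b c h * \<sigma>s h * \<rho>s h)
      = (\<Prod>j=1..i. real (b j)) / (\<Prod>j=1..i. real (c j)) * casoratian \<sigma>s \<rho>s i"
    by (rule pseudo_cosine_seq_christoffel_darboux[OF \<sigma> \<rho> distance_regular_a0[OF assms(1)]])
  then show ?thesis unfolding casoratian_def .
qed

end
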